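(* Fix $I,M,R$ and a coupling $\mathcal{T}$ in which every variable $m\in\{1,\dots,M\}$ belongs to at least one triplet. The PCTF3D model $(\mu,\Theta)$ is identifiable (respectively generically recoverable) if and only if the $R$-term additive polynomial model $(\mu,\Theta')$, $\Theta'=\Theta_1^R$, is identifiable (respectively generically recoverable).
   Context: Coupling: a set $\mathcal{T}$ of $T$ three-element subsets of $\{1,\dots,M\}$. Parameters $\theta=(\theta_1,\dots,\theta_R)$, $\theta_r=(\lambda_r,\mathbf{a}^{(1)}_r,\dots,\mathbf{a}^{(M)}_r)\in\mathbb{R}\times(\mathbb{R}^I)^M$. Rank-one map $\mu_1(\theta_r)=\lambda_r\big(\mathrm{vec}(\mathbf{a}^{(j)}_r\circ\mathbf{a}^{(k)}_r\circ\mathbf{a}^{(\ell)}_r)\big)_{\{j,k,\ell\}\in\mathcal{T}}\in\mathbb{R}^{TI^3}$ (triplets listed in a fixed order, $j<k<\ell$), and $\mu(\theta)=\mu_1(\theta_1)+\cdots+\mu_1(\theta_R)$. Constraint sets: $\Theta=\{\theta:\lambda_r\ge0,\ \sum_r\lambda_r=1,\ \mathbf{a}^{(m)}_r\ge0,\ \mathbf{1}_I^T\mathbf{a}^{(m)}_r=1\}$; $\Theta_1=\mathbb{R}_+\times\Delta_I^M=\{(\lambda,\mathbf{a}^{(1)},\dots,\mathbf{a}^{(M)}):\lambda\ge0,\mathbf{a}^{(m)}\ge0,\mathbf{1}_I^T\mathbf{a}^{(m)}=1\}$ and $\Theta'=\Theta_1^R$ (no sum constraint on the $\lambda_r$). "Generic"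 means outside a subset of measure zero with respect to Lebesgue measure on the affine hull of the relevant constraint set. Identifiability of $(\mu,\Theta)$: for generic $\theta\in\Theta$, every $\theta'\in\Theta$ with $\mu(\theta')=\mu(\theta)$ is a permutation of the blocks $\theta_r$. Identifiability of the additive model $(\mu,\Theta_1^R)$: for generic $\theta\in\Theta_1^R$, every $\theta'\in\Theta_1^R$ with $\mu(\theta')=\mu(\theta)$ is obtained by permuting the blocks and replacing blocks $\theta_r$ by $\theta'_r$ with $\mu_1(\theta'_r)=\mu_1(\theta_r)$. A model $(\mu,S)$ is generically recoverable if for generic $\theta\in S$ the set $\{\theta'\in S:\mu(\theta')=\mu(\theta)\}$ is finite. *)

theory Defs
  imports "HOL-Analysis.Analysis"
begin

text \<open>Parameter block theta_r = (lambda_r, a_r^(1), ..., a_r^(M)): the second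
component is the M x I array of factor vectors (a_r^(m))_i = snd b $ m $ i.
I = CARD('i), M = CARD('m) (variables ordered by the linorder of 'm), R = CARD('r).\<close>

type_synonym ('i, 'm) block = "real \<times> (real ^ 'i ^ 'm)"
type_synonym ('i, 'm, 'r) param = "(real \<times> (real ^ 'i ^ 'm)) ^ 'r"

text \<open>A coupling: a set of triplets {j,k,l}, each represented by its elements
listed in increasing order j < k < l.\<close>
definition coupling :: "('m::{finite,linorder} \<times> 'm \<times> 'm) set \<Rightarrow> bool" where
  "coupling T \<longleftrightarrow> (\<forall>(j,k,l)\<in>T. j < k \<and> k < l)"

text \<open>Rank-one map mu_1: for each triplet (j,k,l) in T, the (vectorized)
tensor lambda * a^(j) o a^(k) o a^(l); entries are indexed by
(triplet, i1, i2, i3). Coordinates for triples not in T are set to 0.\<close>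
definition mu1 :: "('m::{finite,linorder} \<times> 'm \<times> 'm) set \<Rightarrow> ('i::finite, 'm) block
    \<Rightarrow> ('m \<times> 'm \<times> 'm) \<Rightarrow> 'i \<Rightarrow> 'i \<Rightarrow> 'i \<Rightarrow> real" where
  "mu1 T b = (\<lambda>(j,k,l) i1 i2 i3. if (j,k,l) \<in> T
      then fst b * (snd b $ j $ i1) * (snd b $ k $ i2) * (snd b $ l $ i3) else 0)"

definition mu :: "('m::{finite,linorder} \<times> 'm \<times> 'm) set \<Rightarrow> ('i::finite, 'm, 'r::finite) param
    \<Rightarrow> ('m \<times> 'm \<times> 'm) \<Rightarrow> 'i \<Rightarrow> 'i \<Rightarrow> 'i \<Rightarrow> real" where
  "mu T \<theta> = (\<lambda>t i1 i2 i3. \<Sum>r\<in>UNIV. mu1 T (\<theta> $ r) t i1 i2 i3)"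

definition Theta1 :: "('i::finite, 'm::finite) block set" where
  "Theta1 = {b. fst b \<ge> 0 \<and> (\<forall>m i. snd b $ m $ i \<ge> 0) \<and> (\<forall>m. (\<Sum>i\<in>UNIV. snd b $ m $ i) = 1)}"

definition ThetaP :: "('i::finite, 'm::finite, 'r::finite) param set" where
  "ThetaP = {\<theta>. \<forall>r. \<theta> $ r \<in> Theta1}"

definition Theta :: "('i::finite, 'm::finite, 'r::finite) param set" where
  "Theta = {\<theta>. (\<forall>r. \<theta> $ r \<in> Theta1) \<and> (\<Sum>r\<in>UNIV. fst (\<theta> $ r)) = 1}"

text \<open>A set N has measure zero with respect to Lebesgue measure on the affine hull
of S. With V the direction (linear subspace parallel to affine hull S) and W its
orthogonal complement, the ambient space is isometric to (affine hull S) x W via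
(a,w) |-> a + w, so (by Fubini) N is null in the affine hull iff N + W is
Lebesgue-null in the ambient Euclidean space.\<close>
definition affine_null :: "'a::euclidean_space set \<Rightarrow> 'a set \<Rightarrow> bool" where
  "affine_null S N \<longleftrightarrow>
     (let V = span {x - y | x y. x \<in> S \<and> y \<in> S};
          W = {w. \<forall>v\<in>V. inner w v = 0}
      in N \<subseteq> affine hull S \<and> {x + w | x w. x \<in> N \<and> w \<in> W} \<in> null_sets lebesgue)"

definition generically :: "'a::euclidean_space set \<Rightarrow> ('a \<Rightarrow> bool) \<Rightarrow> bool" where
  "generically S P \<longleftrightarrow> (\<exists>N. affine_null S N \<and> (\<forall>\<theta>\<in>S - N. P \<theta>))"

definition identifiable :: "('m::{finite,linorder} \<times> 'm \<times> 'm) set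
    \<Rightarrow> ('i::finite, 'm, 'r::finite) param set \<Rightarrow> bool" where
  "identifiable T S \<longleftrightarrow> generically S (\<lambda>\<theta>.
     \<forall>\<theta>'\<in>S. mu T \<theta>' = mu T \<theta> \<longrightarrow>
       (\<exists>\<sigma>. \<sigma> permutes (UNIV :: 'r set) \<and> (\<forall>r. \<theta>' $ r = \<theta> $ (\<sigma> r))))"

definition additive_identifiable :: "('m::{finite,linorder} \<times> 'm \<times> 'm) set
    \<Rightarrow> ('i::finite, 'm, 'r::finite) param set \<Rightarrow> bool" where
  "additive_identifiable T S \<longleftrightarrow> generically S (\<lambda>\<theta>.
     \<forall>\<theta>'\<in>S. mu T \<theta>' = mu T \<theta> \<longrightarrow>
       (\<exists>\<sigma>. \<sigma> permutes (UNIV :: 'r set) \<and> (\<forall>r. mu1 T (\<theta>' $ r) = mu1 T (\<theta> $ (\<sigma> r)))))"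

definition gen_recoverable :: "('m::{finite,linorder} \<times> 'm \<times> 'm) set
    \<Rightarrow> ('i::finite, 'm, 'r::finite) param set \<Rightarrow> bool" where
  "gen_recoverable T S \<longleftrightarrow> generically S (\<lambda>\<theta>. finite {\<theta>'\<in>S. mu T \<theta>' = mu T \<theta>})"

end

theory Submission
  imports Defs
begin

text \<open>Theta' is the cone over Theta: scaling every weight \<lambda> by c > 0 multiplies mu by c,
while summing a coupled tensor of mu \<theta> over all its entries gives the total weight of \<theta>,
because the factors lie in the simplex. Hence the mu-fibres in Theta' are the rescaled
mu-fibres in Theta, so finiteness of fibres and uniqueness up to permuting blocks pass between
the two models. For the additive model one also needs that mu1 is injective on blocks with
\<lambda> > 0: the three marginals of \<lambda> a \<circ> b \<circ> c are \<lambda> a, \<lambda> b and \<lambda> c, and every variable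
occurs in a triplet.

Genericity passes between the affine hulls as well. The normal space of Theta is that of
Theta' plus the line through the weight vector (1, ..., 1), and the map dividing the weights
of p by their total s and adding ln s (1, ..., 1) is a diffeomorphism of {s > 0} onto the
whole space; it and its inverse carry thickened null sets of one affine hull into thickened
null sets of the other.\<close>

section \<open>Genericity on affine hulls\<close>

definition affine_normals :: "'a::euclidean_space set \<Rightarrow> 'a set" where
  "affine_normals S = {w. \<forall>x\<in>S. \<forall>y\<in>S. inner w (x - y) = 0}"

lemma subspace_affine_normals: "subspace (affine_normals S)"
  by (auto simp add: subspace_def affine_normals_def inner_add_left)

lemma affine_normals_antimono: "S \<subseteq> S' \<Longrightarrow> affine_normals S' \<subseteq> affine_normals S"
  by (auto simp add: affine_normals_def)

lemma affine_normals_eq_orthogonal_span: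
  "{w. \<forall>v\<in>span {x - y |x y. x \<in> S \<and> y \<in> S}. inner w v = 0} = affine_normals S"
proof safe
  fix w assume "\<forall>v\<in>span {x - y |x y. x \<in> S \<and> y \<in> S}. inner w v = 0"
  then show "w \<in> affine_normals S"
    unfolding affine_normals_def by (auto intro: span_base)
next
  fix w v assume w: "w \<in> affine_normals S" and v: "v \<in> span {x - y |x y. x \<in> S \<and> y \<in> S}"
  have "orthogonal w v"
    by (rule orthogonal_to_span[OF v]) (use w in \<open>auto simp: affine_normals_def orthogonal_def\<close>)
  then show "inner w v = 0" by (simp add: orthogonal_def)
qed

lemma affine_null_iff:
  "affine_null S N \<longleftrightarrow> N \<subseteq> affine hull S \<and> negligible (N + affine_normals S)"
proof -
  have "{x + w |x w. x \<in> N \<and> w \<in> affine_normals S} = N + affine_normals S"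
    by (auto simp: set_plus_def)
  then show ?thesis
    unfolding affine_null_def Let_def affine_normals_eq_orthogonal_span negligible_iff_null_sets by simp
qed

lemma affine_null_Un:
  assumes "affine_null S N" "affine_null S N'" shows "affine_null S (N \<union> N')"
proof -
  have "(N \<union> N') + affine_normals S = (N + affine_normals S) \<union> (N' + affine_normals S)"
    by (auto simp: set_plus_def)
  then show ?thesis
    using assms by (simp add: affine_null_iff negligible_Un)
qed

lemma generically_mono: "generically S P \<Longrightarrow> (\<And>x. x \<in> S \<Longrightarrow> P x \<Longrightarrow> Q x) \<Longrightarrow> generically S Q"
  unfolding generically_def by blast

lemma generically_conj:
  assumes "generically S P" "generically S Q" shows "generically S (\<lambda>x. P x \<and> Q x)"
proof -
  obtain N N' where "affine_null S N" "\<forall>x\<in>S - N. P x" "affine_null S N'" "\<forall>x\<in>S - N'. Q x"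
    using assms unfolding generically_def by blast
  then show ?thesis
    unfolding generically_def by (intro exI[of _ "N \<union> N'"]) (auto intro: affine_null_Un)
qed

lemma affine_null_differentiable_image:
  fixes F :: "'a::euclidean_space \<Rightarrow> 'a"
  assumes "affine_null S N" and "F differentiable_on D" and "N' \<subseteq> affine hull S'"
    and "N' + affine_normals S' \<subseteq> F ` ((N + affine_normals S) \<inter> D)"
  shows "affine_null S' N'"
proof -
  have "negligible ((N + affine_normals S) \<inter> D)"
    using assms(1) negligible_subset unfolding affine_null_iff by blast
  then have "negligible (F ` ((N + affine_normals S) \<inter> D))"
    using assms(2) differentiable_on_subset
    by (blast intro: negligible_differentiable_image_negligible[OF order_refl])
  then show ?thesis
    using assms(3,4) negligible_subset unfolding affine_null_iff by blast
qed

section \<open>Rescaling the weights\<close>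

definition scale_weights :: "real \<Rightarrow> ('i::finite, 'm::finite, 'r::finite) param \<Rightarrow> ('i, 'm, 'r) param" where
  "scale_weights c \<theta> = (\<chi> r. (c * fst (\<theta> $ r), snd (\<theta> $ r)))"

definition weight_part :: "('i::finite, 'm::finite, 'r::finite) param \<Rightarrow> ('i, 'm, 'r) param" where
  "weight_part \<theta> = (\<chi> r. (fst (\<theta> $ r), 0))"

definition total_weight :: "('i::finite, 'm::finite, 'r::finite) param \<Rightarrow> real" where
  "total_weight \<theta> = (\<Sum>r\<in>UNIV. fst (\<theta> $ r))"

definition unit_weights :: "('i::finite, 'm::finite, 'r::finite) param" where
  "unit_weights = (\<chi> r. (1, 0))"

definition weight_basis :: "'r \<Rightarrow> ('i::finite, 'm::finite, 'r::finite) param" where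
  "weight_basis r\<^sub>0 = (\<chi> r. if r = r\<^sub>0 then (1, 0) else 0)"

definition uniform_factors :: "('i::finite, 'm::finite, 'r::finite) param" where
  "uniform_factors = (\<chi> r. (0, \<chi> m i. 1 / real CARD('i)))"

lemma scale_weights_nth [simp]: "scale_weights c \<theta> $ r = (c * fst (\<theta> $ r), snd (\<theta> $ r))"
  by (simp add: scale_weights_def)

lemma scale_weights_scale_weights [simp]: "scale_weights a (scale_weights b \<theta>) = scale_weights (a * b) \<theta>"
  by (simp add: vec_eq_iff)

lemma scale_weights_1 [simp]: "scale_weights 1 \<theta> = \<theta>"
  by (simp add: vec_eq_iff)

lemma scale_weights_add: "scale_weights c (\<theta> + \<eta>) = scale_weights c \<theta> + scale_weights c \<eta>"
  by (simp add: vec_eq_iff algebra_simps)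

lemma scale_weights_conv: "scale_weights c \<theta> = \<theta> + (c - 1) *\<^sub>R weight_part \<theta>"
  by (simp add: weight_part_def vec_eq_iff prod_eq_iff algebra_simps)

lemma bounded_linear_scale_weights: "bounded_linear (scale_weights c)"
  by (rule bounded_linearI') (simp_all add: vec_eq_iff algebra_simps)

lemma inj_scale_weights: "c \<noteq> 0 \<Longrightarrow> inj (scale_weights c)"
  by (metis injI nonzero_divide_eq_eq scale_weights_1 scale_weights_scale_weights)

lemma bounded_linear_weight_part: "bounded_linear weight_part"
  by (rule bounded_linearI') (simp_all add: weight_part_def vec_eq_iff)

lemma weight_part_diff: "weight_part (\<theta> - \<eta>) = weight_part \<theta> - weight_part \<eta>"
  by (simp add: weight_part_def vec_eq_iff)

lemma inner_weight_part: "inner w (weight_part \<theta>) = (\<Sum>r\<in>UNIV. fst (w $ r) * fst (\<theta> $ r))"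
  by (simp add: weight_part_def inner_vec_def inner_prod_def)

lemma inner_weight_basis: "inner \<theta> (weight_basis r) = fst (\<theta> $ r)"
  by (simp add: weight_basis_def inner_vec_def inner_prod_def if_distrib cong: if_cong)

lemma weight_basis_neq_0: "weight_basis r \<noteq> 0"
  by (auto simp add: weight_basis_def vec_eq_iff zero_prod_def)

lemma total_weight_eq_inner: "total_weight \<theta> = inner unit_weights \<theta>"
  by (simp add: total_weight_def unit_weights_def inner_vec_def inner_prod_def)

lemma total_weight_add: "total_weight (\<theta> + \<eta>) = total_weight \<theta> + total_weight \<eta>"
  by (simp add: total_weight_eq_inner inner_add_right)

lemma total_weight_scaleR: "total_weight (c *\<^sub>R \<theta>) = c * total_weight \<theta>"
  by (simp add: total_weight_eq_inner)

lemma total_weight_scale_weights: "total_weight (scale_weights c \<theta>) = c * total_weight \<theta>"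
  by (simp add: total_weight_def sum_distrib_left)

lemma total_weight_unit_weights:
  "total_weight (unit_weights :: ('i::finite, 'm::finite, 'r::finite) param) = real CARD('r)"
  by (simp add: total_weight_def unit_weights_def)

lemma total_weight_pos: "(\<And>r. 0 < fst (\<theta> $ r)) \<Longrightarrow> 0 < total_weight \<theta>"
  unfolding total_weight_def by (rule sum_pos) auto

lemma Theta_subset_ThetaP: "Theta \<subseteq> ThetaP"
  by (auto simp add: Theta_def ThetaP_def)

lemma ThetaP_nth: "\<theta> \<in> ThetaP \<Longrightarrow> \<theta> $ r \<in> Theta1"
  by (simp add: ThetaP_def)

lemma total_weight_Theta: "\<theta> \<in> Theta \<Longrightarrow> total_weight \<theta> = 1"
  by (simp add: Theta_def total_weight_def)

lemma scale_weights_ThetaP: "\<theta> \<in> ThetaP \<Longrightarrow> 0 \<le> c \<Longrightarrow> scale_weights c \<theta> \<in> ThetaP"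
  by (simp add: ThetaP_def Theta1_def)

lemma scale_weights_Theta:
  "\<theta> \<in> ThetaP \<Longrightarrow> 0 < total_weight \<theta> \<Longrightarrow> scale_weights (1 / total_weight \<theta>) \<theta> \<in> Theta"
  by (simp add: Theta_def ThetaP_def Theta1_def total_weight_def flip: sum_divide_distrib)

lemma uniform_factors_ThetaP: "uniform_factors \<in> ThetaP"
  by (simp add: uniform_factors_def ThetaP_def Theta1_def)

lemma factors_add_weight_basis_Theta:
  "\<theta> \<in> ThetaP \<Longrightarrow> scale_weights 0 \<theta> + weight_basis r \<in> Theta"
  by (simp add: weight_basis_def Theta_def ThetaP_def Theta1_def if_distrib cong: if_cong)

section \<open>Normal spaces of Theta' and Theta\<close>

lemma affine_normals_ThetaP_weight: "w \<in> affine_normals ThetaP \<Longrightarrow> fst (w $ r) = 0"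
proof -
  assume w: "w \<in> affine_normals ThetaP"
  let ?u = "scale_weights 0 uniform_factors"
  have "?u \<in> ThetaP" "?u + weight_basis r \<in> ThetaP"
    using uniform_factors_ThetaP factors_add_weight_basis_Theta Theta_subset_ThetaP
    by (auto intro: scale_weights_ThetaP)
  then have "inner w ((?u + weight_basis r) - ?u) = 0"
    using w unfolding affine_normals_def by blast
  then show ?thesis
    by (simp add: inner_weight_basis)
qed

lemma scale_weights_affine_normals_ThetaP:
  "w \<in> affine_normals ThetaP \<Longrightarrow> scale_weights c w = w"
  by (simp add: affine_normals_ThetaP_weight vec_eq_iff prod_eq_iff)

lemma total_weight_affine_normals_ThetaP:
  "w \<in> affine_normals ThetaP \<Longrightarrow> total_weight w = 0"
  by (simp add: affine_normals_ThetaP_weight total_weight_def)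

lemma unit_weights_affine_normals_Theta: "unit_weights \<in> affine_normals Theta"
  by (simp add: affine_normals_def total_weight_Theta inner_diff_right flip: total_weight_eq_inner)

lemma affine_normals_Theta_decompose:
  fixes w :: "('i::finite, 'm::finite, 'r::finite) param"
  assumes w: "w \<in> affine_normals Theta"
  shows "w - fst (w $ r\<^sub>0) *\<^sub>R unit_weights \<in> affine_normals ThetaP"
proof -
  define t where "t = fst (w $ r\<^sub>0)"
  have const: "fst (w $ r) = t" for r
  proof -
    have "scale_weights 0 uniform_factors + weight_basis r' \<in> Theta" for r' :: 'r
      by (rule factors_add_weight_basis_Theta[OF uniform_factors_ThetaP])
    then have "inner w ((scale_weights 0 uniform_factors + weight_basis r)
                      - (scale_weights 0 uniform_factors + weight_basis r\<^sub>0)) = 0"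
      using w unfolding affine_normals_def by blast
    then show ?thesis by (simp add: t_def inner_diff_right inner_weight_basis)
  qed
  have "inner w (x - y) = t * total_weight (x - y)" if "x \<in> ThetaP" "y \<in> ThetaP" for x y
  proof -
    \<comment> \<open>Moving all the weight of x and y onto a single block lands in Theta.\<close>
    let ?x = "scale_weights 0 x + weight_basis r\<^sub>0" and ?y = "scale_weights 0 y + weight_basis r\<^sub>0"
    have "?x \<in> Theta" "?y \<in> Theta"
      using that by (simp_all add: factors_add_weight_basis_Theta)
    then have "inner w (?x - ?y) = 0"
      using w unfolding affine_normals_def by blast
    have "inner w (x - y) = inner w (weight_part (x - y) + (?x - ?y))"
      by (rule arg_cong[where f = "inner w"]) (simp add: scale_weights_conv[of 0] weight_part_diff)
    also have "\<dots> = inner w (weight_part (x - y))"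
      using \<open>inner w (?x - ?y) = 0\<close> by (simp only: inner_add_right add_0_right)
    also have "\<dots> = t * total_weight (x - y)"
      by (simp add: inner_weight_part const total_weight_def sum_distrib_left)
    finally show ?thesis .
  qed
  then show ?thesis
    by (simp add: affine_normals_def inner_diff_left t_def flip: total_weight_eq_inner)
qed

lemma affine_normals_Theta_eq:
  "affine_normals (Theta :: ('i::finite, 'm::finite, 'r::finite) param set)
     = affine_normals ThetaP + span {unit_weights}" (is "?W = ?W' + ?E")
proof
  show "?W' + ?E \<subseteq> ?W"
    using subspace_affine_normals affine_normals_antimono[OF Theta_subset_ThetaP]
      unit_weights_affine_normals_Theta
    by (intro subspace_sum_minimal span_minimal) auto
  show "?W \<subseteq> ?W' + ?E"
  proof
    fix w :: "('i, 'm, 'r) param" assume "w \<in> affine_normals Theta"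
    then have "w = (w - fst (w $ undefined) *\<^sub>R unit_weights) + fst (w $ undefined) *\<^sub>R unit_weights"
      "w - fst (w $ undefined) *\<^sub>R unit_weights \<in> affine_normals ThetaP"
      by (simp_all add: affine_normals_Theta_decompose)
    then show "w \<in> ?W' + ?E"
      by (metis set_plus_intro span_base span_mul singletonI)
  qed
qed

lemma total_weight_affine_hull_Theta: "\<theta> \<in> affine hull Theta \<Longrightarrow> total_weight \<theta> = 1"
proof -
  have "affine hull Theta \<subseteq> {\<theta>. inner unit_weights \<theta> = 1}"
    by (rule hull_minimal)
      (simp_all add: affine_hyperplane subset_eq total_weight_Theta[unfolded total_weight_eq_inner])
  then show "\<theta> \<in> affine hull Theta \<Longrightarrow> total_weight \<theta> = 1"
    by (auto simp: total_weight_eq_inner)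
qed

lemma scale_weights_affine_hull_Theta:
  assumes "0 \<le> c" "\<theta> \<in> affine hull Theta"
  shows "scale_weights c \<theta> \<in> affine hull ThetaP"
proof -
  have "scale_weights c ` (affine hull Theta) = affine hull (scale_weights c ` Theta)"
    by (rule affine_hull_linear_image[OF bounded_linear_scale_weights])
  also have "\<dots> \<subseteq> affine hull ThetaP"
    using assms(1) Theta_subset_ThetaP scale_weights_ThetaP by (intro hull_mono) blast
  finally show ?thesis using assms(2) by blast
qed

section \<open>Charts between the cone and the slice\<close>

definition log_normalize :: "('i::finite, 'm::finite, 'r::finite) param \<Rightarrow> ('i, 'm, 'r) param" where
  "log_normalize p = scale_weights (1 / total_weight p) p + ln (total_weight p) *\<^sub>R unit_weights"

(* The inverse of log_normalize, whose value at p has total weight 1 + CARD('r) ln (total_weight p). *)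
definition exp_rescale :: "('i::finite, 'm::finite, 'r::finite) param \<Rightarrow> ('i, 'm, 'r) param" where
  "exp_rescale q = (let t = (total_weight q - 1) / real CARD('r)
                    in scale_weights (exp t) (q - t *\<^sub>R unit_weights))"

lemma differentiable_total_weight: "total_weight differentiable at p"
  unfolding total_weight_eq_inner[abs_def]
  by (rule bounded_linear_imp_differentiable[OF bounded_linear_inner_right])

lemma differentiable_scale_weights:
  assumes "f differentiable at x" "g differentiable at x"
  shows "(\<lambda>x. scale_weights (f x) (g x)) differentiable at x"
proof -
  have "(\<lambda>x. weight_part (g x)) differentiable at x"
    by (rule differentiable_compose[OF bounded_linear_imp_differentiable[OF bounded_linear_weight_part] assms(2)])
  then show ?thesis
    unfolding scale_weights_conv
    by (intro differentiable_add differentiable_scaleR differentiable_diff differentiable_const assms)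
qed

lemma differentiable_on_log_normalize: "log_normalize differentiable_on {p. 0 < total_weight p}"
proof (rule differentiable_at_imp_differentiable_on, safe)
  fix p :: "('i::finite, 'm::finite, 'r::finite) param" assume pos: "0 < total_weight p"
  have "ln differentiable at (total_weight p)"
    using DERIV_ln[OF pos] real_differentiable_def by blast
  then have "(\<lambda>p. ln (total_weight p)) differentiable at p"
    by (rule differentiable_compose[OF _ differentiable_total_weight])
  moreover have "(\<lambda>p. 1 / total_weight p) differentiable at p"
    using pos by (intro differentiable_divide differentiable_const differentiable_total_weight) auto
  ultimately show "log_normalize differentiable at p"
    unfolding log_normalize_def[abs_def]
    by (intro differentiable_add differentiable_scaleR differentiable_scale_weights
        differentiable_ident differentiable_const)
qed

lemma differentiable_on_exp_rescale: "exp_rescale differentiable_on S"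
proof (rule differentiable_at_imp_differentiable_on)
  fix q :: "('i::finite, 'm::finite, 'r::finite) param"
  let ?t = "\<lambda>q. (total_weight q - 1) / real CARD('r)"
  have t: "?t differentiable at q"
    by (intro differentiable_divide differentiable_diff differentiable_const differentiable_total_weight) auto
  have "exp differentiable at (?t q)"
    using DERIV_exp real_differentiable_def by blast
  then have "(\<lambda>q. exp (?t q)) differentiable at q"
    by (rule differentiable_compose[OF _ t])
  then show "exp_rescale differentiable at q"
    unfolding exp_rescale_def[abs_def] Let_def
    by (intro differentiable_scale_weights differentiable_diff differentiable_scaleR t
        differentiable_ident differentiable_const)
qed

lemma log_normalize_scale_weights:
  assumes "total_weight \<theta> = 1" "w \<in> affine_normals ThetaP" "0 < c"
  shows "log_normalize (scale_weights c \<theta> + w) = \<theta> + w + ln c *\<^sub>R unit_weights"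
proof -
  have "total_weight (scale_weights c \<theta> + w) = c"
    using assms by (simp add: total_weight_add total_weight_scale_weights total_weight_affine_normals_ThetaP)
  then show ?thesis
    using assms by (simp add: log_normalize_def scale_weights_add scale_weights_affine_normals_ThetaP)
qed

lemma exp_rescale_shift:
  fixes \<theta> :: "('i::finite, 'm::finite, 'r::finite) param"
  assumes "total_weight \<theta> = 1" "w \<in> affine_normals ThetaP"
  shows "exp_rescale (\<theta> + w + t *\<^sub>R unit_weights) = scale_weights (exp t) \<theta> + w"
proof -
  have "total_weight (\<theta> + w + t *\<^sub>R unit_weights) = 1 + t * real CARD('r)"
    using assms by (simp add: total_weight_add total_weight_scaleR total_weight_unit_weights
        total_weight_affine_normals_ThetaP)
  then show ?thesis
    using assms by (simp add: exp_rescale_def scale_weights_add scale_weights_affine_normals_ThetaP)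
qed

lemma thickening_Theta_subset_log_normalize_image:
  assumes "N \<subseteq> {\<theta> \<in> affine hull Theta. \<forall>c>0. scale_weights c \<theta> \<in> N'}"
  shows "N + affine_normals Theta
           \<subseteq> log_normalize ` ((N' + affine_normals ThetaP) \<inter> {p. 0 < total_weight p})"
proof
  fix x assume "x \<in> N + affine_normals Theta"
  then obtain \<theta> w t where \<theta>: "\<theta> \<in> N" and w: "w \<in> affine_normals ThetaP"
    and x: "x = \<theta> + w + t *\<^sub>R unit_weights"
    unfolding affine_normals_Theta_eq span_singleton
    by (auto elim!: set_plus_elim simp: add.assoc)
  have tw: "total_weight \<theta> = 1"
    using \<theta> assms total_weight_affine_hull_Theta by blast
  let ?p = "scale_weights (exp t) \<theta> + w"
  have "scale_weights (exp t) \<theta> \<in> N'"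
    using \<theta> assms by auto
  then have "?p \<in> N' + affine_normals ThetaP"
    using w by (rule set_plus_intro)
  moreover have "0 < total_weight ?p"
    using tw w by (simp add: total_weight_add total_weight_scale_weights total_weight_affine_normals_ThetaP)
  moreover have "x = log_normalize ?p"
    using log_normalize_scale_weights[OF tw w] x by simp
  ultimately show "x \<in> log_normalize ` ((N' + affine_normals ThetaP) \<inter> {p. 0 < total_weight p})"
    by blast
qed

lemma rays_affine_hull_ThetaP:
  "N \<subseteq> affine hull Theta \<Longrightarrow> {scale_weights c \<theta> | c \<theta>. 0 < c \<and> \<theta> \<in> N} \<subseteq> affine hull ThetaP"
  by (auto intro!: scale_weights_affine_hull_Theta)

lemma thickening_ThetaP_subset_exp_rescale_image:
  assumes "N \<subseteq> affine hull Theta"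
  shows "{scale_weights c \<theta> | c \<theta>. 0 < c \<and> \<theta> \<in> N} + affine_normals ThetaP
           \<subseteq> exp_rescale ` ((N + affine_normals Theta) \<inter> UNIV)"
proof
  fix x assume "x \<in> {scale_weights c \<theta> | c \<theta>. 0 < c \<and> \<theta> \<in> N} + affine_normals ThetaP"
  then obtain c \<theta> w where c: "0 < c" and \<theta>: "\<theta> \<in> N" and w: "w \<in> affine_normals ThetaP"
    and x: "x = scale_weights c \<theta> + w"
    by (auto elim!: set_plus_elim)
  have tw: "total_weight \<theta> = 1"
    using \<theta> assms total_weight_affine_hull_Theta by blast
  have "w + ln c *\<^sub>R unit_weights \<in> affine_normals Theta"
    unfolding affine_normals_Theta_eq by (intro set_plus_intro w span_mul span_base) simp
  then have "\<theta> + w + ln c *\<^sub>R unit_weights \<in> N + affine_normals Theta"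
    using \<theta> by (metis add.assoc set_plus_intro)
  moreover have "x = exp_rescale (\<theta> + w + ln c *\<^sub>R unit_weights)"
    using exp_rescale_shift[OF tw w] c x by simp
  ultimately show "x \<in> exp_rescale ` ((N + affine_normals Theta) \<inter> UNIV)"
    by blast
qed

section \<open>Transfer of genericity\<close>

lemma generically_Theta_if_ThetaP:
  assumes "generically ThetaP P"
  shows "generically (Theta :: ('i::finite, 'm::finite, 'r::finite) param set)
           (\<lambda>\<theta>. \<exists>c>0. P (scale_weights c \<theta>))"
proof -
  obtain N' :: "('i, 'm, 'r) param set" where N': "affine_null ThetaP N'" "\<forall>\<theta>\<in>ThetaP - N'. P \<theta>"
    using assms unfolding generically_def by blast
  \<comment> \<open>N' may contain all of Theta, which is null in the affine hull of Theta'; only points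
    whose whole ray lies in N' are discarded.\<close>
  define N where "N = {\<theta> \<in> affine hull Theta. \<forall>c>0. scale_weights c \<theta> \<in> N'}"
  have "affine_null Theta N"
    by (rule affine_null_differentiable_image[OF N'(1) differentiable_on_log_normalize])
      (use thickening_Theta_subset_log_normalize_image[of N N'] in \<open>auto simp: N_def\<close>)
  moreover have "\<exists>c>0. P (scale_weights c \<theta>)" if \<theta>: "\<theta> \<in> Theta - N" for \<theta>
  proof -
    have "\<theta> \<in> affine hull Theta"
      using \<theta> hull_subset[of Theta affine] by blast
    then obtain c where "0 < c" "scale_weights c \<theta> \<notin> N'"
      using \<theta> unfolding N_def by blast
    moreover have "scale_weights c \<theta> \<in> ThetaP"
      using \<theta> \<open>0 < c\<close> Theta_subset_ThetaP by (auto intro: scale_weights_ThetaP)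
    ultimately show ?thesis
      using N'(2) by blast
  qed
  ultimately show ?thesis
    unfolding generically_def by blast
qed

lemma generically_ThetaP_if_Theta:
  assumes "generically Theta P"
  shows "generically (ThetaP :: ('i::finite, 'm::finite, 'r::finite) param set)
           (\<lambda>\<theta>. 0 < total_weight \<theta> \<longrightarrow> P (scale_weights (1 / total_weight \<theta>) \<theta>))"
proof -
  obtain N :: "('i, 'm, 'r) param set" where N: "affine_null Theta N" "\<forall>\<theta>\<in>Theta - N. P \<theta>"
    using assms unfolding generically_def by blast
  define N' where "N' = {scale_weights c \<theta> | c \<theta>. 0 < c \<and> \<theta> \<in> N}"
  have hull: "N \<subseteq> affine hull (Theta :: ('i, 'm, 'r) param set)"
    using N(1) unfolding affine_null_iff by blast
  have "affine_null ThetaP N'"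
    unfolding N'_def
    by (rule affine_null_differentiable_image[OF N(1) differentiable_on_exp_rescale
          rays_affine_hull_ThetaP[OF hull] thickening_ThetaP_subset_exp_rescale_image[OF hull]])
  moreover have "P (scale_weights (1 / total_weight \<theta>) \<theta>)"
    if "\<theta> \<in> ThetaP - N'" "0 < total_weight \<theta>" for \<theta>
  proof -
    let ?\<eta> = "scale_weights (1 / total_weight \<theta>) \<theta>"
    have "?\<eta> \<notin> N"
    proof
      assume "?\<eta> \<in> N"
      then have "scale_weights (total_weight \<theta>) ?\<eta> \<in> N'"
        using that(2) unfolding N'_def by blast
      then show False
        using that by simp
    qed
    moreover have "?\<eta> \<in> Theta"
      using that scale_weights_Theta by blast
    ultimately show ?thesis
      using N(2) by blast
  qed
  ultimately show ?thesis
    unfolding generically_def by blast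
qed

lemma generically_ThetaP_weights_pos:
  "generically (ThetaP :: ('i::finite, 'm::finite, 'r::finite) param set) (\<lambda>\<theta>. \<forall>r. 0 < fst (\<theta> $ r))"
proof -
  define N :: "('i, 'm, 'r) param set" where "N = {\<theta> \<in> ThetaP. \<exists>r. fst (\<theta> $ r) = 0}"
  have "N + affine_normals ThetaP \<subseteq> (\<Union>r. {x. inner (weight_basis r) x = 0})"
    using affine_normals_ThetaP_weight
    by (fastforce simp: N_def inner_commute[of "weight_basis _"] inner_weight_basis elim!: set_plus_elim)
  moreover have "negligible (\<Union>r. {x :: ('i, 'm, 'r) param. inner (weight_basis r) x = 0})"
    by (intro negligible_Union finite_imageI finite) (auto intro!: negligible_hyperplane weight_basis_neq_0)
  moreover have "N \<subseteq> affine hull ThetaP"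
    using hull_subset[of ThetaP affine] unfolding N_def by blast
  ultimately have "affine_null ThetaP N"
    unfolding affine_null_iff by (blast intro: negligible_subset)
  moreover have "0 < fst (\<theta> $ r)" if "\<theta> \<in> ThetaP - N" for \<theta> r
  proof -
    have "0 \<le> fst (\<theta> $ r)" "fst (\<theta> $ r) \<noteq> 0"
      using that by (auto simp: N_def ThetaP_def Theta1_def)
    then show ?thesis by linarith
  qed
  ultimately show ?thesis
    unfolding generically_def by blast
qed

section \<open>Marginals and fibres of mu\<close>

lemma mu_scale_weights: "mu T (scale_weights c \<theta>) t i\<^sub>1 i\<^sub>2 i\<^sub>3 = c * mu T \<theta> t i\<^sub>1 i\<^sub>2 i\<^sub>3"
  by (cases t) (simp add: mu_def mu1_def sum_distrib_left mult.assoc if_distrib cong: if_cong)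

lemma mu1_marginals:
  assumes b: "b \<in> Theta1" and t: "(j, k, l) \<in> T"
  shows "(\<Sum>i\<^sub>2\<in>UNIV. \<Sum>i\<^sub>3\<in>UNIV. mu1 T b (j, k, l) i\<^sub>1 i\<^sub>2 i\<^sub>3) = fst b * snd b $ j $ i\<^sub>1"
    and "(\<Sum>i\<^sub>1\<in>UNIV. \<Sum>i\<^sub>3\<in>UNIV. mu1 T b (j, k, l) i\<^sub>1 i\<^sub>2 i\<^sub>3) = fst b * snd b $ k $ i\<^sub>2"
    and "(\<Sum>i\<^sub>1\<in>UNIV. \<Sum>i\<^sub>2\<in>UNIV. mu1 T b (j, k, l) i\<^sub>1 i\<^sub>2 i\<^sub>3) = fst b * snd b $ l $ i\<^sub>3"
proof -
  have "(\<Sum>i\<in>UNIV. snd b $ m $ i) = 1" for m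
    using b unfolding Theta1_def by blast
  then show "(\<Sum>i\<^sub>2\<in>UNIV. \<Sum>i\<^sub>3\<in>UNIV. mu1 T b (j, k, l) i\<^sub>1 i\<^sub>2 i\<^sub>3) = fst b * snd b $ j $ i\<^sub>1"
    and "(\<Sum>i\<^sub>1\<in>UNIV. \<Sum>i\<^sub>3\<in>UNIV. mu1 T b (j, k, l) i\<^sub>1 i\<^sub>2 i\<^sub>3) = fst b * snd b $ k $ i\<^sub>2"
    and "(\<Sum>i\<^sub>1\<in>UNIV. \<Sum>i\<^sub>2\<in>UNIV. mu1 T b (j, k, l) i\<^sub>1 i\<^sub>2 i\<^sub>3) = fst b * snd b $ l $ i\<^sub>3"
    using t by (simp_all add: mu1_def flip: sum_distrib_left sum_distrib_right)
qed

lemma mu1_total_mass: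
  assumes b: "b \<in> Theta1" and t: "(j, k, l) \<in> T"
  shows "(\<Sum>i\<^sub>1\<in>UNIV. \<Sum>i\<^sub>2\<in>UNIV. \<Sum>i\<^sub>3\<in>UNIV. mu1 T b (j, k, l) i\<^sub>1 i\<^sub>2 i\<^sub>3) = fst b"
proof -
  have "(\<Sum>i\<in>UNIV. snd b $ j $ i) = 1"
    using b unfolding Theta1_def by blast
  then show ?thesis
    using mu1_marginals(1)[OF b t] by (simp flip: sum_distrib_left)
qed

lemma mu_total_mass:
  assumes "\<theta> \<in> ThetaP" and t: "(j, k, l) \<in> T"
  shows "(\<Sum>i\<^sub>1\<in>UNIV. \<Sum>i\<^sub>2\<in>UNIV. \<Sum>i\<^sub>3\<in>UNIV. mu T \<theta> (j, k, l) i\<^sub>1 i\<^sub>2 i\<^sub>3) = total_weight \<theta>"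
proof -
  have "(\<Sum>i\<^sub>1\<in>UNIV. \<Sum>i\<^sub>2\<in>UNIV. \<Sum>i\<^sub>3\<in>UNIV. mu T \<theta> (j, k, l) i\<^sub>1 i\<^sub>2 i\<^sub>3)
      = (\<Sum>r\<in>UNIV. \<Sum>i\<^sub>1\<in>UNIV. \<Sum>i\<^sub>2\<in>UNIV. \<Sum>i\<^sub>3\<in>UNIV. mu1 T (\<theta> $ r) (j, k, l) i\<^sub>1 i\<^sub>2 i\<^sub>3)"
    unfolding mu_def by (subst sum.swap, subst (2) sum.swap, subst (3) sum.swap) simp
  also have "\<dots> = total_weight \<theta>"
    using mu1_total_mass[OF ThetaP_nth[OF assms(1)] t] by (simp add: total_weight_def)
  finally show ?thesis .
qed

lemma Theta1_eq_if_mu1_eq: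
  assumes b: "b \<in> Theta1" and b': "b' \<in> Theta1" and pos: "0 < fst b"
    and eq: "mu1 T b = mu1 T b'"
    and cov: "\<forall>m. \<exists>(j, k, l)\<in>T. m = j \<or> m = k \<or> m = l"
  shows "b = b'"
proof -
  obtain j k l where t: "(j, k, l) \<in> T"
    using cov by blast
  have weight: "fst b = fst b'"
    using mu1_total_mass[OF b t] mu1_total_mass[OF b' t] eq by simp
  have "fst b * snd b $ m $ i = fst b' * snd b' $ m $ i" for m i
  proof -
    obtain j k l where t: "(j, k, l) \<in> T" and "m = j \<or> m = k \<or> m = l"
      using cov by blast
    then show ?thesis
      using mu1_marginals[OF b t] mu1_marginals[OF b' t] eq by auto
  qed
  then have "snd b = snd b'"
    using weight pos by (simp add: vec_eq_iff)
  then show ?thesis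
    using weight by (simp add: prod_eq_iff)
qed

lemma total_weight_eq_if_mu_eq:
  assumes "T \<noteq> {}" "\<theta> \<in> ThetaP" "\<theta>' \<in> ThetaP" "mu T \<theta>' = mu T \<theta>"
  shows "total_weight \<theta>' = total_weight \<theta>"
proof -
  obtain j k l where t: "(j, k, l) \<in> T"
    using assms(1) by auto
  show ?thesis
    using mu_total_mass[OF assms(2) t] mu_total_mass[OF assms(3) t] assms(4) by simp
qed

definition mu_fibre :: "('m::{finite,linorder} \<times> 'm \<times> 'm) set \<Rightarrow> ('i::finite, 'm, 'r::finite) param set
    \<Rightarrow> ('i, 'm, 'r) param \<Rightarrow> ('i, 'm, 'r) param set" where
  "mu_fibre T S \<theta> = {\<theta>' \<in> S. mu T \<theta>' = mu T \<theta>}"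

lemma gen_recoverable_iff: "gen_recoverable T S \<longleftrightarrow> generically S (\<lambda>\<theta>. finite (mu_fibre T S \<theta>))"
  by (simp add: gen_recoverable_def mu_fibre_def)

lemma scale_weights_mu_fibre_Theta:
  "0 \<le> c \<Longrightarrow> scale_weights c ` mu_fibre T Theta \<theta> \<subseteq> mu_fibre T ThetaP (scale_weights c \<theta>)"
  using Theta_subset_ThetaP
  by (auto intro: scale_weights_ThetaP simp: mu_fibre_def fun_eq_iff mu_scale_weights)

lemma mu_fibre_ThetaP_subset:
  assumes "T \<noteq> {}" "\<theta> \<in> ThetaP" "0 < total_weight \<theta>"
  shows "mu_fibre T ThetaP \<theta>
           \<subseteq> scale_weights (total_weight \<theta>) ` mu_fibre T Theta (scale_weights (1 / total_weight \<theta>) \<theta>)"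
proof
  fix \<theta>' assume \<theta>': "\<theta>' \<in> mu_fibre T ThetaP \<theta>"
  let ?s = "total_weight \<theta>"
  have "total_weight \<theta>' = ?s"
    using \<theta>' total_weight_eq_if_mu_eq[OF assms(1,2)] by (auto simp: mu_fibre_def)
  then have "scale_weights (1 / ?s) \<theta>' \<in> Theta"
    using \<theta>' assms(3) scale_weights_Theta by (fastforce simp: mu_fibre_def)
  moreover have "mu T (scale_weights (1 / ?s) \<theta>') = mu T (scale_weights (1 / ?s) \<theta>)"
    using \<theta>' by (simp add: mu_fibre_def fun_eq_iff mu_scale_weights)
  moreover have "\<theta>' = scale_weights ?s (scale_weights (1 / ?s) \<theta>')"
    using assms(3) by simp
  ultimately show "\<theta>' \<in> scale_weights ?s ` mu_fibre T Theta (scale_weights (1 / ?s) \<theta>)"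
    unfolding mu_fibre_def by blast
qed

section \<open>Identifiability and recoverability\<close>

definition determined_up_to_perm :: "('m::{finite,linorder} \<times> 'm \<times> 'm) set
    \<Rightarrow> ('i::finite, 'm, 'r::finite) param set \<Rightarrow> ('i, 'm, 'r) param \<Rightarrow> bool" where
  "determined_up_to_perm T S \<theta> \<longleftrightarrow>
     (\<forall>\<theta>'\<in>mu_fibre T S \<theta>. \<exists>\<sigma>. \<sigma> permutes UNIV \<and> (\<forall>r. \<theta>' $ r = \<theta> $ \<sigma> r))"

definition terms_determined_up_to_perm :: "('m::{finite,linorder} \<times> 'm \<times> 'm) set
    \<Rightarrow> ('i::finite, 'm, 'r::finite) param set \<Rightarrow> ('i, 'm, 'r) param \<Rightarrow> bool" where
  "terms_determined_up_to_perm T S \<theta> \<longleftrightarrow>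
     (\<forall>\<theta>'\<in>mu_fibre T S \<theta>. \<exists>\<sigma>. \<sigma> permutes UNIV \<and> (\<forall>r. mu1 T (\<theta>' $ r) = mu1 T (\<theta> $ \<sigma> r)))"

lemma identifiable_iff: "identifiable T S \<longleftrightarrow> generically S (determined_up_to_perm T S)"
  by (simp add: identifiable_def determined_up_to_perm_def[abs_def] mu_fibre_def Ball_def imp_conjL)

lemma additive_identifiable_iff:
  "additive_identifiable T S \<longleftrightarrow> generically S (terms_determined_up_to_perm T S)"
  by (simp add: additive_identifiable_def terms_determined_up_to_perm_def[abs_def] mu_fibre_def
      Ball_def imp_conjL)

lemma determined_up_to_perm_Theta:
  assumes "\<theta> \<in> Theta" "0 < c" "\<forall>r. 0 < fst (scale_weights c \<theta> $ r)"
    and "terms_determined_up_to_perm T ThetaP (scale_weights c \<theta>)"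
    and cov: "\<forall>m. \<exists>(j, k, l)\<in>T. m = j \<or> m = k \<or> m = l"
  shows "determined_up_to_perm T Theta \<theta>"
  unfolding determined_up_to_perm_def
proof
  fix \<theta>' assume "\<theta>' \<in> mu_fibre T Theta \<theta>"
  then have \<theta>': "scale_weights c \<theta>' \<in> mu_fibre T ThetaP (scale_weights c \<theta>)"
    using scale_weights_mu_fibre_Theta[of c T \<theta>] assms(2) by auto
  then obtain \<sigma> where \<sigma>: "\<sigma> permutes UNIV"
    and "\<forall>r. mu1 T (scale_weights c \<theta>' $ r) = mu1 T (scale_weights c \<theta> $ \<sigma> r)"
    using assms(4) unfolding terms_determined_up_to_perm_def by blast
  moreover have "scale_weights c \<theta> \<in> ThetaP" "scale_weights c \<theta>' \<in> ThetaP"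
    using assms(1,2) \<theta>' Theta_subset_ThetaP by (auto intro: scale_weights_ThetaP simp: mu_fibre_def)
  ultimately have "scale_weights c \<theta> $ \<sigma> r = scale_weights c \<theta>' $ r" for r
    using Theta1_eq_if_mu1_eq[OF ThetaP_nth ThetaP_nth _ _ cov] assms(3) by metis
  then have "\<theta>' $ r = \<theta> $ \<sigma> r" for r
    using assms(2) by (simp add: prod_eq_iff)
  then show "\<exists>\<sigma>. \<sigma> permutes UNIV \<and> (\<forall>r. \<theta>' $ r = \<theta> $ \<sigma> r)"
    using \<sigma> by blast
qed

lemma terms_determined_up_to_perm_ThetaP:
  assumes "T \<noteq> {}" "\<theta> \<in> ThetaP" "0 < total_weight \<theta>"
    and "determined_up_to_perm T Theta (scale_weights (1 / total_weight \<theta>) \<theta>)"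
  shows "terms_determined_up_to_perm T ThetaP \<theta>"
  unfolding terms_determined_up_to_perm_def
proof
  fix \<theta>' assume "\<theta>' \<in> mu_fibre T ThetaP \<theta>"
  then obtain \<eta> where \<eta>: "\<eta> \<in> mu_fibre T Theta (scale_weights (1 / total_weight \<theta>) \<theta>)"
    and \<theta>': "\<theta>' = scale_weights (total_weight \<theta>) \<eta>"
    using mu_fibre_ThetaP_subset[OF assms(1-3)] by blast
  then obtain \<sigma> where \<sigma>: "\<sigma> permutes UNIV"
    and "\<forall>r. \<eta> $ r = scale_weights (1 / total_weight \<theta>) \<theta> $ \<sigma> r"
    using assms(4) unfolding determined_up_to_perm_def by blast
  then have "\<theta>' $ r = \<theta> $ \<sigma> r" for r
    using assms(3) by (simp add: \<theta>')
  then show "\<exists>\<sigma>. \<sigma> permutes UNIV \<and> (\<forall>r. mu1 T (\<theta>' $ r) = mu1 T (\<theta> $ \<sigma> r))"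
    using \<sigma> by auto
qed

lemma finite_mu_fibre_Theta:
  assumes "0 < c" "finite (mu_fibre T ThetaP (scale_weights c \<theta>))"
  shows "finite (mu_fibre T Theta \<theta>)"
proof (rule finite_imageD)
  show "finite (scale_weights c ` mu_fibre T Theta \<theta>)"
    using assms scale_weights_mu_fibre_Theta[of c T \<theta>] finite_subset by auto
  show "inj_on (scale_weights c) (mu_fibre T Theta \<theta>)"
    using assms(1) by (intro inj_on_subset[OF inj_scale_weights subset_UNIV]) simp
qed

lemma finite_mu_fibre_ThetaP:
  assumes "T \<noteq> {}" "\<theta> \<in> ThetaP" "0 < total_weight \<theta>"
    and "finite (mu_fibre T Theta (scale_weights (1 / total_weight \<theta>) \<theta>))"
  shows "finite (mu_fibre T ThetaP \<theta>)"
  using finite_subset[OF mu_fibre_ThetaP_subset[OF assms(1-3)] finite_imageI[OF assms(4)]] .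

lemma identifiable_Theta_if_additive_identifiable_ThetaP:
  assumes "additive_identifiable T (ThetaP :: ('i::finite, 'm::{finite,linorder}, 'r::finite) param set)"
    and "\<forall>m. \<exists>(j, k, l)\<in>T. m = j \<or> m = k \<or> m = l"
  shows "identifiable T (Theta :: ('i, 'm, 'r) param set)"
  using generically_Theta_if_ThetaP[OF generically_conj[OF
        assms(1)[unfolded additive_identifiable_iff] generically_ThetaP_weights_pos]]
  unfolding identifiable_iff by (rule generically_mono) (use determined_up_to_perm_Theta assms(2) in blast)

lemma additive_identifiable_ThetaP_if_identifiable_Theta:
  assumes "identifiable T (Theta :: ('i::finite, 'm::{finite,linorder}, 'r::finite) param set)" and "T \<noteq> {}"
  shows "additive_identifiable T (ThetaP :: ('i, 'm, 'r) param set)"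
  using generically_conj[OF generically_ThetaP_weights_pos
        generically_ThetaP_if_Theta[OF assms(1)[unfolded identifiable_iff]]]
  unfolding additive_identifiable_iff
  by (rule generically_mono) (use terms_determined_up_to_perm_ThetaP assms(2) total_weight_pos in blast)

lemma gen_recoverable_Theta_if_ThetaP:
  assumes "gen_recoverable T (ThetaP :: ('i::finite, 'm::{finite,linorder}, 'r::finite) param set)"
  shows "gen_recoverable T (Theta :: ('i, 'm, 'r) param set)"
  using generically_Theta_if_ThetaP[OF assms[unfolded gen_recoverable_iff]]
  unfolding gen_recoverable_iff by (rule generically_mono) (use finite_mu_fibre_Theta in blast)

lemma gen_recoverable_ThetaP_if_Theta:
  assumes "gen_recoverable T (Theta :: ('i::finite, 'm::{finite,linorder}, 'r::finite) param set)" and "T \<noteq> {}"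
  shows "gen_recoverable T (ThetaP :: ('i, 'm, 'r) param set)"
  using generically_conj[OF generically_ThetaP_weights_pos
        generically_ThetaP_if_Theta[OF assms(1)[unfolded gen_recoverable_iff]]]
  unfolding gen_recoverable_iff
  by (rule generically_mono) (use finite_mu_fibre_ThetaP assms(2) total_weight_pos in blast)

theorem mainTheorem3:
  fixes T :: "('m::{finite,linorder} \<times> 'm \<times> 'm) set"
  assumes "coupling T"
    and "\<forall>m. \<exists>(j,k,l)\<in>T. m = j \<or> m = k \<or> m = l"
  shows "(identifiable T (Theta :: ('i::finite, 'm, 'r::finite) param set)
            \<longleftrightarrow> additive_identifiable T (ThetaP :: ('i, 'm, 'r) param set))
       \<and> (gen_recoverable T (Theta :: ('i, 'm, 'r) param set)
            \<longleftrightarrow> gen_recoverable T (ThetaP :: ('i, 'm, 'r) param set))"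
proof -
  have "T \<noteq> {}"
    using assms(2) by blast
  then show ?thesis
    using identifiable_Theta_if_additive_identifiable_ThetaP[OF _ assms(2)]
      additive_identifiable_ThetaP_if_identifiable_Theta
      gen_recoverable_Theta_if_ThetaP gen_recoverable_ThetaP_if_Theta
    by blast
qed

end
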